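(* Let $R$ be a commutative Noetherian ring, $s\in R$ and $r\ge2$. Then there exists $k\in\mathbb{N}$ such that for every column $b^+=(b_1,\ldots,b_r)^t\in R^r$ with $s\in\langle b_1,\ldots,b_r\rangle$ and every column $b^-=(b_{-r},\ldots,b_{-1})^t\in R^r$ such that $\sum_{i=1}^rb_ib_{-i}=0$ and every entry $b_{-i}$ is divisible by $s^k$, there exists $M\in\Theta(r,R)$ with $b^-=Mb^+$.
   Context: For an $r\times r$ matrix $g$ with rows and columns indexed $1,\ldots,r$, its antidiagonal transpose $g^{\tau}$ has entries $(g^\tau)_{i,j}=g_{r+1-j,r+1-i}$. $\Theta(r,R)$ is the set of $r\times r$ matrices $M$ over $R$ with $M^{\tau}=-M$ and all antidiagonal entries $M_{i,r+1-i}$ equal to zero. *)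

theory Defs
  imports "HOL-Algebra.Ring_Divisibility" "HOL-Algebra.Ideal"
begin

text \<open>Vectors and matrices over the ring R are represented as functions on
  natural-number indices; only indices in 1..r are relevant.\<close>

definition Theta :: "('a, 'b) ring_scheme \<Rightarrow> nat \<Rightarrow> (nat \<Rightarrow> nat \<Rightarrow> 'a) set" where
  "Theta R r = {M. (\<forall>i\<in>{1..r}. \<forall>j\<in>{1..r}. M i j \<in> carrier R)
     \<and> (\<forall>i\<in>{1..r}. \<forall>j\<in>{1..r}. M (r + 1 - j) (r + 1 - i) = \<ominus>\<^bsub>R\<^esub> M i j)
     \<and> (\<forall>i\<in>{1..r}. M i (r + 1 - i) = \<zero>\<^bsub>R\<^esub>)}"

end

theory Submission
  imports Defs
begin

(* Since R is Noetherian, the annihilators of the powers s^n stabilise, say from N on;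
   take k = N + 1.  Write s = \<Sum> a_j b_j and b_{-i} = s^(N+1) d_i, and put c_i = s^N d_i,
   so that b_{-i} = s c_i.  Then s^(N+1) \<Sum> d_j b_j = \<Sum> b_j b_{-j} = 0, hence by stability
   \<Sum> c_j b_j = s^N \<Sum> d_j b_j = 0.  The alternating matrix W = c a^t - a c^t therefore
   satisfies W b^+ = c (a . b^+) - a (c . b^+) = s c, and reversing the order of its rows
   gives the required element of Theta(r, R). *)

lemma (in cring) finsum_combination_linear:
  assumes "finite A" and "a \<in> A \<rightarrow> carrier R" and "a' \<in> A \<rightarrow> carrier R"
    and "b \<in> A \<rightarrow> carrier R" and "u \<in> carrier R" and "v \<in> carrier R"
  shows "(\<Oplus>i\<in>A. (u \<otimes> a i \<oplus> v \<otimes> a' i) \<otimes> b i)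
       = u \<otimes> (\<Oplus>i\<in>A. a i \<otimes> b i) \<oplus> v \<otimes> (\<Oplus>i\<in>A. a' i \<otimes> b i)"
proof -
  have "(\<Oplus>i\<in>A. (u \<otimes> a i \<oplus> v \<otimes> a' i) \<otimes> b i)
      = (\<Oplus>i\<in>A. u \<otimes> (a i \<otimes> b i) \<oplus> v \<otimes> (a' i \<otimes> b i))"
    using assms by (intro finsum_cong') (auto simp: Pi_iff l_distr m_assoc)
  also have "\<dots> = (\<Oplus>i\<in>A. u \<otimes> (a i \<otimes> b i)) \<oplus> (\<Oplus>i\<in>A. v \<otimes> (a' i \<otimes> b i))"
    using assms by (intro finsum_addf) (auto simp: Pi_iff)
  also have "\<dots> = u \<otimes> (\<Oplus>i\<in>A. a i \<otimes> b i) \<oplus> v \<otimes> (\<Oplus>i\<in>A. a' i \<otimes> b i)"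
    using assms by (simp add: finsum_rdistr Pi_def)
  finally show ?thesis .
qed

lemma (in cring) ideal_finsum_combinations:
  assumes "finite A" and "b \<in> A \<rightarrow> carrier R"
  shows "ideal {\<Oplus>i\<in>A. a i \<otimes> b i | a. a \<in> A \<rightarrow> carrier R} R" (is "ideal ?S R")
proof -
  have sub: "?S \<subseteq> carrier R"
    using assms by (auto intro!: finsum_closed)
  have comb: "u \<otimes> y \<oplus> v \<otimes> z \<in> ?S"
    if yz: "y \<in> ?S" "z \<in> ?S" and uv: "u \<in> carrier R" "v \<in> carrier R" for u v y z
  proof -
    obtain a a' where a: "a \<in> A \<rightarrow> carrier R" "y = (\<Oplus>i\<in>A. a i \<otimes> b i)"
      and a': "a' \<in> A \<rightarrow> carrier R" "z = (\<Oplus>i\<in>A. a' i \<otimes> b i)"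
      using yz by blast
    have "u \<otimes> y \<oplus> v \<otimes> z = (\<Oplus>i\<in>A. (u \<otimes> a i \<oplus> v \<otimes> a' i) \<otimes> b i)"
      using finsum_combination_linear[OF assms(1) a(1) a'(1) assms(2) uv] a(2) a'(2) by simp
    moreover have "(\<lambda>i. u \<otimes> a i \<oplus> v \<otimes> a' i) \<in> A \<rightarrow> carrier R"
      using a(1) a'(1) uv by auto
    ultimately show ?thesis
      by (intro CollectI exI[of _ "\<lambda>i. u \<otimes> a i \<oplus> v \<otimes> a' i"] conjI)
  qed
  have scal: "u \<otimes> y \<in> ?S" if y: "y \<in> ?S" and u: "u \<in> carrier R" for u y
  proof -
    have "y \<in> carrier R" using y sub by blast
    then show ?thesis using comb[OF y y u zero_closed] u by simp
  qed
  show ?thesis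
  proof (rule idealI)
    show "subgroup ?S (add_monoid R)"
    proof (rule add.subgroupI)
      have "(\<Oplus>i\<in>A. \<zero> \<otimes> b i) \<in> ?S"
        by (intro CollectI exI[of _ "\<lambda>i. \<zero>"]) simp
      then show "?S \<noteq> {}" by blast
      show "\<ominus> y \<in> ?S" if y: "y \<in> ?S" for y
      proof -
        have "y \<in> carrier R" using y sub by blast
        then show ?thesis using scal[OF y add.inv_closed[OF one_closed]] by (simp add: l_minus)
      qed
      show "y \<oplus> z \<in> ?S" if yz: "y \<in> ?S" "z \<in> ?S" for y z
      proof -
        have "y \<in> carrier R" "z \<in> carrier R" using yz sub by blast+
        then show ?thesis using comb[OF yz one_closed one_closed] by simp
      qed
    qed (rule sub)
    show "x \<otimes> y \<in> ?S" if "y \<in> ?S" "x \<in> carrier R" for x y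
      using scal that .
    show "y \<otimes> x \<in> ?S" if y: "y \<in> ?S" and x: "x \<in> carrier R" for x y
    proof -
      have "y \<in> carrier R" using y sub by blast
      then show ?thesis using scal[OF y x] x by (simp add: m_comm)
    qed
  qed (rule ring_axioms)
qed

lemma (in cring) genideal_image_finsum_combination:
  assumes "finite A" and "b \<in> A \<rightarrow> carrier R" and "x \<in> Idl (b ` A)"
  shows "\<exists>a\<in>A \<rightarrow> carrier R. x = (\<Oplus>i\<in>A. a i \<otimes> b i)"
proof -
  have "b j \<in> {\<Oplus>i\<in>A. a i \<otimes> b i | a. a \<in> A \<rightarrow> carrier R}" if "j \<in> A" for j
  proof -
    have "(\<Oplus>i\<in>A. (if i = j then \<one> else \<zero>) \<otimes> b i) = (\<Oplus>i\<in>A. if i = j then b i else \<zero>)"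
      using assms(2) by (intro finsum_cong') (auto simp: Pi_iff)
    also have "\<dots> = b j"
      using that assms(1,2) by (intro add.finprod_singleton_swap) auto
    finally show ?thesis
      by (intro CollectI exI[of _ "\<lambda>i. if i = j then \<one> else \<zero>"] conjI) auto
  qed
  then have "Idl (b ` A) \<subseteq> {\<Oplus>i\<in>A. a i \<otimes> b i | a. a \<in> A \<rightarrow> carrier R}"
    by (intro genideal_minimal ideal_finsum_combinations assms) blast
  with assms(3) obtain a where "a \<in> A \<rightarrow> carrier R" "x = (\<Oplus>i\<in>A. a i \<otimes> b i)"
    by blast
  then show ?thesis by blast
qed

lemma (in cring) ideal_annihilator:
  assumes a: "a \<in> carrier R"
  shows "ideal {x \<in> carrier R. a \<otimes> x = \<zero>} R"
proof (rule idealI)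
  show "subgroup {x \<in> carrier R. a \<otimes> x = \<zero>} (add_monoid R)"
    by (rule add.subgroupI) (use a in \<open>auto simp: r_distr r_minus\<close>)
  fix u x assume x: "x \<in> {x \<in> carrier R. a \<otimes> x = \<zero>}" and u: "u \<in> carrier R"
  then have xR: "x \<in> carrier R" and ax: "a \<otimes> x = \<zero>"
    by auto
  have "a \<otimes> (u \<otimes> x) = u \<otimes> (a \<otimes> x)"
    by (rule m_lcomm[OF a u xR])
  then show "u \<otimes> x \<in> {x \<in> carrier R. a \<otimes> x = \<zero>}"
    using ax u xR by simp
  have "a \<otimes> (x \<otimes> u) = (a \<otimes> x) \<otimes> u"
    by (rule m_assoc[OF a xR u, symmetric])
  then show "x \<otimes> u \<in> {x \<in> carrier R. a \<otimes> x = \<zero>}"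
    using ax u xR by simp
qed (rule ring_axioms)

lemma (in noetherian_ring) increasing_ideals_stabilize:
  fixes I :: "'i::linorder \<Rightarrow> 'a set"
  assumes "\<And>n. ideal (I n) R" and "mono I"
  shows "\<exists>N. \<forall>n. I n \<subseteq> I N"
proof -
  have "I m \<subseteq> I n \<or> I n \<subseteq> I m" for m n
    using linear[of m n] monoD[OF assms(2)] by blast
  then have "\<forall>J\<in>range I. \<forall>K\<in>range I. J \<subseteq> K \<or> K \<subseteq> J"
    by blast
  then have "subset.chain {J. ideal J R} (range I)"
    unfolding pred_on.chain_def using assms(1) by blast
  then have "\<Union>(range I) \<in> range I"
    by (intro ideal_chain_is_trivial) auto
  then show ?thesis by blast
qed

lemma pow_annihilators_stabilize:
  fixes R (structure)
  assumes "cring R" and "noetherian_ring R" and "s \<in> carrier R"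
  shows "\<exists>N::nat. \<forall>n::nat. \<forall>x\<in>carrier R. s [^] n \<otimes> x = \<zero> \<longrightarrow> s [^] N \<otimes> x = \<zero>"
proof -
  interpret cring R by fact
  interpret noetherian_ring R by fact
  define Ann where "Ann n = {x \<in> carrier R. s [^] (n::nat) \<otimes> x = \<zero>}" for n
  have "Ann n \<subseteq> Ann (Suc n)" for n
  proof
    fix x assume "x \<in> Ann n"
    then have x: "x \<in> carrier R" and "s [^] n \<otimes> x = \<zero>"
      unfolding Ann_def by auto
    then have "s [^] Suc n \<otimes> x = \<zero>"
      using assms(3) by (metis m_assoc nat_pow_Suc2 nat_pow_closed r_null)
    then show "x \<in> Ann (Suc n)"
      unfolding Ann_def using x by blast
  qed
  then have "mono Ann"
    unfolding mono_iff_le_Suc by blast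
  moreover have "ideal (Ann n) R" for n
    unfolding Ann_def using assms(3) by (intro ideal_annihilator nat_pow_closed)
  ultimately obtain N where N: "\<forall>n. Ann n \<subseteq> Ann N"
    using increasing_ideals_stabilize by blast
  show ?thesis
  proof (intro exI[of _ N] allI ballI impI)
    fix n :: nat and x assume "x \<in> carrier R" "s [^] n \<otimes> x = \<zero>"
    then have "x \<in> Ann N"
      using N unfolding Ann_def by auto
    then show "s [^] N \<otimes> x = \<zero>"
      unfolding Ann_def by simp
  qed
qed

lemma (in cring) power_divisible_orthogonal_cofactors:
  assumes s: "s \<in> carrier R"
    and stable: "\<And>x. x \<in> carrier R \<Longrightarrow> s [^] Suc N \<otimes> x = \<zero> \<Longrightarrow> s [^] N \<otimes> x = \<zero>"
    and fin: "finite A" and bp: "bp \<in> A \<rightarrow> carrier R"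
    and dvd: "\<forall>i\<in>A. s [^] Suc N divides bm i"
    and orth: "(\<Oplus>i\<in>A. bp i \<otimes> bm i) = \<zero>"
  shows "\<exists>c\<in>A \<rightarrow> carrier R. (\<forall>i\<in>A. bm i = c i \<otimes> s) \<and> (\<Oplus>j\<in>A. c j \<otimes> bp j) = \<zero>"
proof -
  obtain d where d: "d \<in> A \<rightarrow> carrier R" and bm: "\<forall>i\<in>A. bm i = s [^] Suc N \<otimes> d i"
    using dvd unfolding factor_def by (metis Pi_I)
  define t where "t = (\<Oplus>j\<in>A. d j \<otimes> bp j)"
  have t: "t \<in> carrier R"
    unfolding t_def using d bp by (auto intro!: finsum_closed)
  have sum_scaled: "x \<otimes> t = (\<Oplus>j\<in>A. (x \<otimes> d j) \<otimes> bp j)" if "x \<in> carrier R" for x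
  proof -
    have "x \<otimes> t = (\<Oplus>j\<in>A. x \<otimes> (d j \<otimes> bp j))"
      unfolding t_def using that d bp fin by (simp add: finsum_rdistr Pi_iff)
    also have "\<dots> = (\<Oplus>j\<in>A. (x \<otimes> d j) \<otimes> bp j)"
      using that d bp by (intro finsum_cong') (auto simp: Pi_iff m_assoc)
    finally show ?thesis .
  qed
  have "s [^] Suc N \<otimes> t = (\<Oplus>j\<in>A. bp j \<otimes> bm j)"
    unfolding sum_scaled[OF nat_pow_closed[OF s]]
    using d bp bm s by (intro finsum_cong') (auto simp: Pi_iff m_comm)
  then have "s [^] N \<otimes> t = \<zero>"
    using orth stable t by simp
  moreover have "bm i = (s [^] N \<otimes> d i) \<otimes> s" if "i \<in> A" for i
    using bm d s that by (simp add: Pi_iff m_assoc m_comm m_lcomm)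
  ultimately show ?thesis
    using sum_scaled[OF nat_pow_closed[OF s]] d s
    by (intro bexI[of _ "\<lambda>i. s [^] N \<otimes> d i"]) auto
qed

lemma Theta_reflect_alternating:
  fixes R (structure)
  assumes "\<And>i j. i \<in> {1..r} \<Longrightarrow> j \<in> {1..r} \<Longrightarrow> W i j \<in> carrier R"
    and "\<And>i j. i \<in> {1..r} \<Longrightarrow> j \<in> {1..r} \<Longrightarrow> W j i = \<ominus> W i j"
    and "\<And>i. i \<in> {1..r} \<Longrightarrow> W i i = \<zero>"
  shows "(\<lambda>i j. W (r + 1 - i) j) \<in> Theta R r"
  unfolding Theta_def
proof (intro CollectI conjI ballI)
  fix i j assume i: "i \<in> {1..r}" and j: "j \<in> {1..r}"
  have i': "r + 1 - i \<in> {1..r}" and j': "r + 1 - (r + 1 - j) = j"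
    using i j by auto
  show "W (r + 1 - i) j \<in> carrier R"
    using assms(1) i' j .
  show "W (r + 1 - (r + 1 - j)) (r + 1 - i) = \<ominus> W (r + 1 - i) j"
    unfolding j' using assms(2) i' j .
next
  fix i assume "i \<in> {1..r}"
  then have "r + 1 - i \<in> {1..r}" by auto
  then show "W (r + 1 - i) (r + 1 - i) = \<zero>" by (rule assms(3))
qed

lemma (in cring) exists_Theta_of_cofactors:
  assumes a: "a \<in> {1..r} \<rightarrow> carrier R" and c: "c \<in> {1..r} \<rightarrow> carrier R"
    and bp: "bp \<in> {1..r} \<rightarrow> carrier R"
    and s: "s = (\<Oplus>j\<in>{1..r}. a j \<otimes> bp j)" and orth: "(\<Oplus>j\<in>{1..r}. c j \<otimes> bp j) = \<zero>"
    and bm: "\<forall>i\<in>{1..r}. bm i = c i \<otimes> s"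
  shows "\<exists>M\<in>Theta R r. \<forall>i\<in>{1..r}. bm (r + 1 - i) = (\<Oplus>j\<in>{1..r}. M i j \<otimes> bp j)"
proof -
  define W where "W i j = c i \<otimes> a j \<ominus> a i \<otimes> c j" for i j
  have Theta: "(\<lambda>i j. W (r + 1 - i) j) \<in> Theta R r"
    using a c unfolding W_def
    by (intro Theta_reflect_alternating) (auto simp: Pi_iff a_minus_def minus_add m_comm a_comm r_neg)
  have row: "c k \<otimes> s = (\<Oplus>j\<in>{1..r}. W k j \<otimes> bp j)" if "k \<in> {1..r}" for k
  proof -
    have "W k j = c k \<otimes> a j \<oplus> (\<ominus> a k) \<otimes> c j" if "j \<in> {1..r}" for j
      using a c \<open>k \<in> {1..r}\<close> that unfolding W_def by (simp add: Pi_iff a_minus_def l_minus)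
    then have "(\<Oplus>j\<in>{1..r}. W k j \<otimes> bp j) = (\<Oplus>j\<in>{1..r}. (c k \<otimes> a j \<oplus> (\<ominus> a k) \<otimes> c j) \<otimes> bp j)"
      by (intro finsum_cong') (use a c bp \<open>k \<in> {1..r}\<close> in \<open>auto simp: Pi_iff\<close>)
    also have "\<dots> = c k \<otimes> s"
      using a c bp \<open>k \<in> {1..r}\<close> s orth by (simp add: finsum_combination_linear Pi_iff)
    finally show ?thesis by simp
  qed
  show ?thesis
  proof (intro bexI[of _ "\<lambda>i j. W (r + 1 - i) j"] ballI)
    fix i assume "i \<in> {1..r}"
    then have "r + 1 - i \<in> {1..r}" by auto
    then have "bm (r + 1 - i) = c (r + 1 - i) \<otimes> s"
      using bm by blast
    also have "\<dots> = (\<Oplus>j\<in>{1..r}. W (r + 1 - i) j \<otimes> bp j)"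
      by (rule row) fact
    finally show "bm (r + 1 - i) = (\<Oplus>j\<in>{1..r}. W (r + 1 - i) j \<otimes> bp j)" .
  qed (rule Theta)
qed

theorem lemma11:
  fixes R (structure) and s :: 'a and r :: nat
  assumes "cring R" and "noetherian_ring R" and "s \<in> carrier R" and "r \<ge> 2"
  shows "\<exists>k::nat. \<forall>bp bm :: nat \<Rightarrow> 'a.
           (\<forall>i\<in>{1..r}. bp i \<in> carrier R) \<and> (\<forall>i\<in>{1..r}. bm i \<in> carrier R)
           \<and> s \<in> Idl (bp ` {1..r})
           \<and> (\<Oplus>i\<in>{1..r}. bp i \<otimes> bm i) = \<zero>
           \<and> (\<forall>i\<in>{1..r}. (s [^] k) divides (bm i))
           \<longrightarrow> (\<exists>M\<in>Theta R r. \<forall>i\<in>{1..r}. bm (r + 1 - i) = (\<Oplus>j\<in>{1..r}. M i j \<otimes> bp j))"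
proof -
  interpret cring R by fact
  obtain N :: nat where N: "\<forall>n::nat. \<forall>x\<in>carrier R. s [^] n \<otimes> x = \<zero> \<longrightarrow> s [^] N \<otimes> x = \<zero>"
    using pow_annihilators_stabilize[OF assms(1-3)] by blast
  then have stable: "\<And>x. x \<in> carrier R \<Longrightarrow> s [^] Suc N \<otimes> x = \<zero> \<Longrightarrow> s [^] N \<otimes> x = \<zero>"
    by blast
  show ?thesis
  proof (intro exI[of _ "Suc N"] allI impI, elim conjE)
    fix bp bm :: "nat \<Rightarrow> 'a"
    assume "\<forall>i\<in>{1..r}. bp i \<in> carrier R" and "\<forall>i\<in>{1..r}. bm i \<in> carrier R"
      and s_Idl: "s \<in> Idl (bp ` {1..r})" and orth: "(\<Oplus>i\<in>{1..r}. bp i \<otimes> bm i) = \<zero>"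
      and dvd: "\<forall>i\<in>{1..r}. s [^] Suc N divides bm i"
    then have bp: "bp \<in> {1..r} \<rightarrow> carrier R" by blast
    obtain a where a: "a \<in> {1..r} \<rightarrow> carrier R" and s: "s = (\<Oplus>j\<in>{1..r}. a j \<otimes> bp j)"
      using genideal_image_finsum_combination[OF finite_atLeastAtMost bp s_Idl] by blast
    obtain c where c: "c \<in> {1..r} \<rightarrow> carrier R" and bm: "\<forall>i\<in>{1..r}. bm i = c i \<otimes> s"
      and orth_c: "(\<Oplus>j\<in>{1..r}. c j \<otimes> bp j) = \<zero>"
      using power_divisible_orthogonal_cofactors[OF assms(3) stable finite_atLeastAtMost bp dvd orth]
      by blast
    show "\<exists>M\<in>Theta R r. \<forall>i\<in>{1..r}. bm (r + 1 - i) = (\<Oplus>j\<in>{1..r}. M i j \<otimes> bp j)"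
      by (rule exists_Theta_of_cofactors[OF a c bp s orth_c bm])
  qed
qed

end
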